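(* Let $\varepsilon\ge0$, let $N>2$ and $J$ be integers with $0\le J<N$, let $m,M\in(0,1)$ with $m\le M$, and let $c\in[m,M]$. Define $f\colon[m,M]^{N-J}\to\mathbb{R}$ by \[ f(a_1,\dots,a_{N-J})=\Big(e^{\varepsilon}-(e^{\varepsilon}-1)\frac{m+Jc+S}{N+1}\Big)\prod_{i=1}^{N-J}\Bigg(N+\frac{1-a_i}{1-\frac{\min\{m+(N-1)M,\ (N-2)(a_i-m)+Jc+S\}}{N}}\Bigg), \] where $S=\sum_{i=1}^{N-J}a_i$. Then for all $(a_1,\dots,a_{N-J})\in[m,M]^{N-J}$, \[ f(a_1,\dots,a_{N-J})\le\max\Big\{\max_{t\in[m,U_{N-J-1}]}f_{\mathrm{diag}}(t),\ \max_{k\in\{0,1,\dots,N-J\}}\max_{t\in[m,U_k]}f_k(t)\Big\}, \] where \[ f_{\mathrm{diag}}(t)=\Big(e^{\varepsilon}-(e^{\varepsilon}-1)\frac{m+Jc+(N-J)t}{N+1}\Big)\Bigg(N+\frac{1-t}{1-\frac{(2N-J-2)t-(N-2)m+Jc}{N}}\Bigg)^{N-J}, \] and, for $k\in\{0,1,\dots,N-J\}$, \[ f_k(t)=\Big(e^{\varepsilon}-(e^{\varepsilon}-1)\frac{m+S_k(t)}{N+1}\Big)\Bigg(N+\frac{1-t}{1-\frac{(N-2)(t-m)+S_k(t)}{N}}\Bigg)\Bigg(N+\frac{1-m}{1-\frac{S_k(t)}{N}}\Bigg)^{N-J-k-1}\Bigg(N+\frac{1-B_k(t)}{1-\frac{m+(N-1)M}{N}}\Bigg)^{k},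 \] with $S_k(t)=Jc+t+(N-J-k-1)m+kB_k(t)$, \[ B_k(t)=\frac{(N-1)(M+m)-(Jc+(N-J-k-1)m+t)}{N+k-2},\qquad U_k=\frac{(N-1)(M+m)-(Jc+(N-J-k-1)m)}{N+k-1}. \] *)

theory Defs
  imports Complex_Main
begin

definition pref :: "real \<Rightarrow> nat \<Rightarrow> real \<Rightarrow> real" where
  "pref eps N x = exp eps - (exp eps - 1) * x / (real N + 1)"

text \<open>f(a_1,...,a_{N-J}); coordinates a_1..a_{N-J} are stored as a 0 .. a (N-J-1).\<close>
definition fval :: "real \<Rightarrow> nat \<Rightarrow> nat \<Rightarrow> real \<Rightarrow> real \<Rightarrow> real \<Rightarrow> (nat \<Rightarrow> real) \<Rightarrow> real" where
  "fval eps N J m M c a =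
     (let S = (\<Sum>i<N - J. a i) in
       pref eps N (m + real J * c + S) *
       (\<Prod>i<N - J. real N + (1 - a i) /
          (1 - min (m + (real N - 1) * M) ((real N - 2) * (a i - m) + real J * c + S) / real N)))"

definition fdiag :: "real \<Rightarrow> nat \<Rightarrow> nat \<Rightarrow> real \<Rightarrow> real \<Rightarrow> real \<Rightarrow> real" where
  "fdiag eps N J m c t =
     pref eps N (m + real J * c + (real N - real J) * t) *
     (real N + (1 - t) /
        (1 - ((2 * real N - real J - 2) * t - (real N - 2) * m + real J * c) / real N)) ^ (N - J)"

definition Bk :: "nat \<Rightarrow> nat \<Rightarrow> real \<Rightarrow> real \<Rightarrow> real \<Rightarrow> nat \<Rightarrow> real \<Rightarrow> real" where
  "Bk N J m M c k t =
     ((real N - 1) * (M + m) - (real J * c + (real N - real J - real k - 1) * m + t))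
       / (real N + real k - 2)"

definition Uk :: "nat \<Rightarrow> nat \<Rightarrow> real \<Rightarrow> real \<Rightarrow> real \<Rightarrow> nat \<Rightarrow> real" where
  "Uk N J m M c k =
     ((real N - 1) * (M + m) - (real J * c + (real N - real J - real k - 1) * m))
       / (real N + real k - 1)"

definition Sk :: "nat \<Rightarrow> nat \<Rightarrow> real \<Rightarrow> real \<Rightarrow> real \<Rightarrow> nat \<Rightarrow> real \<Rightarrow> real" where
  "Sk N J m M c k t =
     real J * c + t + (real N - real J - real k - 1) * m + real k * Bk N J m M c k t"

text \<open>The exponent N-J-k-1 may equal -1 (when k = N-J), hence an integer power.\<close>
definition fk :: "real \<Rightarrow> nat \<Rightarrow> nat \<Rightarrow> real \<Rightarrow> real \<Rightarrow> real \<Rightarrow> nat \<Rightarrow> real \<Rightarrow> real" where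
  "fk eps N J m M c k t =
     pref eps N (m + Sk N J m M c k t) *
     (real N + (1 - t) / (1 - ((real N - 2) * (t - m) + Sk N J m M c k t) / real N)) *
     (real N + (1 - m) / (1 - Sk N J m M c k t / real N))
        powi (int N - int J - int k - 1) *
     (real N + (1 - Bk N J m M c k t) / (1 - (m + (real N - 1) * M) / real N)) ^ k"

end

theory Submission
  imports Defs "HOL-Analysis.Analysis"
begin

(*
  Every factor occurring in f, f_diag and f_k has the form N + (1 - x) / (1 - T / N). In f the
  argument is min D (T x) with the cap D = m + (N - 1) M and T x = (N - 2)(x - m) + Jc + S, so for
  fixed S = a_1 + ... + a_{N-J} the product is prod_i g(a_i) for a single function g, to be bounded
  under the constraint that the a_i have sum S.

  The capped factor is affine in x, hence log-concave. Writing N - T x = R + (N - 2)(1 - x), the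
  uncapped factor equals N (R + (N - 1)(1 - x)) / (R + (N - 2)(1 - x)), which is log-concave for
  R >= 0 and log-convex and increasing for R <= 0. If the mean S / (N - J) is at least U_{N-J-1},
  the cap is active at the mean and Jensen's inequality for the capped factor gives
  f_diag(U_{N-J-1}). Otherwise, for R >= 0, g is the minimum of two log-concave functions and Jensen
  gives f_diag at the mean. For R < 0, g increases after truncating each a_i at the point theta where
  the cap is reached, ln g is convex and increasing on [m, theta], and a majorization argument
  moves all but one coordinate to the endpoints m and theta; this configuration is f_k with
  B_k = theta.
*)

section \<open>Convexity, Jensen products and majorization\<close>

lemma convex_on_cong:
  assumes "\<And>x. x \<in> S \<Longrightarrow> f x = g x"
  shows "convex_on S f \<longleftrightarrow> convex_on S g"
proof -
  have "f (u *\<^sub>R x + v *\<^sub>R y) = g (u *\<^sub>R x + v *\<^sub>R y)"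
    if "convex S" "x \<in> S" "y \<in> S" "0 \<le> u" "0 \<le> v" "u + v = 1" for x y u v
    using assms convexD that by blast
  then show ?thesis
    using assms unfolding convex_on_def by auto
qed

lemma concave_on_cong:
  assumes "\<And>x. x \<in> S \<Longrightarrow> f x = g x"
  shows "concave_on S f \<longleftrightarrow> concave_on S g"
  using assms unfolding concave_on_def by (intro convex_on_cong) simp

lemma concave_on_min:
  fixes f g :: "'a::real_vector \<Rightarrow> real"
  assumes "concave_on S f" "concave_on S g"
  shows "concave_on S (\<lambda>x. min (f x) (g x))"
  unfolding concave_on_iff
proof (intro conjI ballI allI impI)
  show "convex S"
    using assms(1) concave_on_imp_convex by blast
  fix x y :: 'a and u v :: real
  assume "x \<in> S" "y \<in> S" "0 \<le> u" "0 \<le> v" "u + v = 1"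
  moreover from this have "u * min (f x) (g x) + v * min (f y) (g y) \<le> u * f x + v * f y"
    and "u * min (f x) (g x) + v * min (f y) (g y) \<le> u * g x + v * g y"
    by (auto intro!: add_mono mult_left_mono)
  ultimately show "u * min (f x) (g x) + v * min (f y) (g y)
      \<le> min (f (u *\<^sub>R x + v *\<^sub>R y)) (g (u *\<^sub>R x + v *\<^sub>R y))"
    using assms unfolding concave_on_iff by (smt (verit))
qed

lemma convex_on_chord_sum:
  fixes \<phi> :: "real \<Rightarrow> real"
  assumes "convex_on {p..q} \<phi>" "u \<in> {p..q}" "v \<in> {p..q}" "u + v = p + q"
  shows "\<phi> u + \<phi> v \<le> \<phi> p + \<phi> q"
proof (cases "p < q")
  case True
  define slope where "slope = (\<phi> q - \<phi> p) / (q - p)"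
  have "\<phi> u + \<phi> v \<le> slope * (u - p) + slope * (v - p) + 2 * \<phi> p"
    using convex_onD_Icc'[OF assms(1) assms(2)] convex_onD_Icc'[OF assms(1) assms(3)]
    unfolding slope_def by linarith
  also have "slope * (u - p) + slope * (v - p) = slope * (q - p)"
    using assms(4) by (simp flip: distrib_left)
  finally show ?thesis
    using True by (simp add: slope_def)
next
  case False
  then have "u = p" "v = p" "q = p"
    using assms(2,3) by auto
  then show ?thesis
    by simp
qed

lemma convex_mono_pair_le_extremal:
  fixes \<phi> :: "real \<Rightarrow> real"
  assumes "convex_on {lo..hi} \<phi>" "mono_on {lo..hi} \<phi>" "u \<in> {lo..hi}" "v \<in> {lo..hi}"
    and "u + v \<le> w" "w \<le> 2 * hi"
  obtains j :: nat and t where "j \<le> 1" "t \<in> {lo..hi}" "(1 - real j) * lo + t + real j * hi = w"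
    and "\<phi> u + \<phi> v \<le> (1 - real j) * \<phi> lo + \<phi> t + real j * \<phi> hi"
proof -
  \<comment> \<open>Spread \<open>u, v\<close> apart, keeping their sum, until one of them hits an endpoint.\<close>
  define p where "p = max lo (u + v - hi)"
  define q where "q = min (u + v - lo) hi"
  have "u + v = p + q" "p \<in> {lo..hi}" "q \<in> {lo..hi}" "u \<in> {p..q}" "v \<in> {p..q}"
    using assms(3,4) by (auto simp: p_def q_def)
  then have pq: "\<phi> u + \<phi> v \<le> \<phi> p + \<phi> q"
    using assms(1) by (intro convex_on_chord_sum) (auto intro: convex_on_subset)
  have mono: "\<phi> r \<le> \<phi> s" if "r \<in> {lo..hi}" "s \<in> {lo..hi}" "r \<le> s" for r s
    by (rule mono_onD[OF assms(2) that])
  show ?thesis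
  proof (cases "w \<le> lo + hi")
    case True
    then have "p = lo" "q \<le> w - lo" "w - lo \<in> {lo..hi}"
      using assms(3-5) by (auto simp: p_def q_def)
    then have "\<phi> u + \<phi> v \<le> \<phi> lo + \<phi> (w - lo)"
      using pq mono[of q "w - lo"] \<open>q \<in> {lo..hi}\<close> by auto
    then show ?thesis
      using that[of 0 "w - lo"] \<open>w - lo \<in> {lo..hi}\<close> by simp
  next
    case False
    then have "p \<le> w - hi" "w - hi \<in> {lo..hi}"
      using assms(3-6) by (auto simp: p_def)
    then have "\<phi> u + \<phi> v \<le> \<phi> (w - hi) + \<phi> hi"
      using pq mono[of p "w - hi"] mono[of q hi] \<open>p \<in> {lo..hi}\<close> \<open>q \<in> {lo..hi}\<close> by auto
    then show ?thesis
      using that[of 1 "w - hi"] \<open>w - hi \<in> {lo..hi}\<close> by simp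
  qed
qed

lemma convex_mono_sum_le_extremal:
  fixes \<phi> :: "real \<Rightarrow> real" and x :: "nat \<Rightarrow> real"
  assumes conv: "convex_on {lo..hi} \<phi>" and mono: "mono_on {lo..hi} \<phi>"
    and "0 < n" "\<And>i. i < n \<Longrightarrow> x i \<in> {lo..hi}" "(\<Sum>i<n. x i) \<le> s" "s \<le> real n * hi"
  shows "\<exists>k t. k < n \<and> t \<in> {lo..hi} \<and> (real n - real k - 1) * lo + t + real k * hi = s \<and>
      (\<Sum>i<n. \<phi> (x i)) \<le> (real n - real k - 1) * \<phi> lo + \<phi> t + real k * \<phi> hi"
  using assms(3-)
proof (induction n arbitrary: s rule: nat_induct_non_zero)
  case 1
  then have "x 0 \<in> {lo..hi}" "x 0 \<le> s" "s \<le> hi"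
    by auto
  moreover from this have "\<phi> (x 0) \<le> \<phi> s"
    by (intro mono_onD[OF mono]) auto
  ultimately show ?case
    by (intro exI[of _ 0] exI[of _ s]) auto
next
  case (Suc n)
  \<comment> \<open>The first \<open>n\<close> coordinates absorb the share \<open>s'\<close> of \<open>s\<close>; the new coordinate is then paired with the
    free coordinate \<open>t\<close> of the induction hypothesis.\<close>
  define s' where "s' = min (s - x n) (real n * hi)"
  have xn: "x n \<in> {lo..hi}"
    using Suc.prems(1) by simp
  have "(\<Sum>i<n. x i) \<le> (\<Sum>i<n. hi)"
    using Suc.prems(1) by (intro sum_mono) auto
  then have "(\<Sum>i<n. x i) \<le> s'"
    using Suc.prems(2) by (simp add: s'_def)
  then obtain k t where k: "k < n" "t \<in> {lo..hi}" "(real n - real k - 1) * lo + t + real k * hi = s'"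
    and IH: "(\<Sum>i<n. \<phi> (x i)) \<le> (real n - real k - 1) * \<phi> lo + \<phi> t + real k * \<phi> hi"
    using Suc.IH[of s'] Suc.prems(1) by (auto simp: s'_def)
  have "t + x n \<le> s - s' + t" "s - s' + t \<le> 2 * hi"
    using Suc.prems(3) k(2) xn by (auto simp: s'_def algebra_simps)
  then obtain j t' where j: "j \<le> 1" "t' \<in> {lo..hi}" "(1 - real j) * lo + t' + real j * hi = s - s' + t"
    and pair: "\<phi> t + \<phi> (x n) \<le> (1 - real j) * \<phi> lo + \<phi> t' + real j * \<phi> hi"
    using convex_mono_pair_le_extremal[OF conv mono k(2) xn] by blast
  show ?case
  proof (intro exI conjI)
    show "k + j < Suc n"
      using k(1) j(1) by simp
    show "(real (Suc n) - real (k + j) - 1) * lo + t' + real (k + j) * hi = s"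
      using k(3) j(3) by (simp add: algebra_simps)
    show "(\<Sum>i<Suc n. \<phi> (x i))
        \<le> (real (Suc n) - real (k + j) - 1) * \<phi> lo + \<phi> t' + real (k + j) * \<phi> hi"
      using IH pair by (simp add: algebra_simps)
  qed (rule j(2))
qed

lemma prod_le_of_sum_ln_le:
  fixes f :: "nat \<Rightarrow> real"
  assumes "\<And>i. i < n \<Longrightarrow> 0 < f i" "0 < B" "(\<Sum>i<n. ln (f i)) \<le> ln B"
  shows "(\<Prod>i<n. f i) \<le> B"
proof -
  have "ln (\<Prod>i<n. f i) = (\<Sum>i<n. ln (f i))"
    by (rule ln_prod) (use assms(1) in force)+
  moreover have "0 < (\<Prod>i<n. f i)"
    using assms(1) by (intro prod_pos) auto
  ultimately show ?thesis
    using assms(2,3) by (metis ln_le_cancel_iff)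
qed

lemma prod_le_power_mean_if_log_concave:
  fixes F :: "real \<Rightarrow> real" and x :: "nat \<Rightarrow> real"
  assumes "concave_on A (\<lambda>x. ln (F x))" "\<And>x. x \<in> A \<Longrightarrow> 0 < F x"
    and "0 < n" "\<And>i. i < n \<Longrightarrow> x i \<in> A"
  shows "(\<Prod>i<n. F (x i)) \<le> F ((\<Sum>i<n. x i) / real n) ^ n"
proof -
  have mean: "(\<Sum>i<n. x i) / real n = (\<Sum>i<n. (1 / real n) *\<^sub>R x i)"
    by (simp add: sum_divide_distrib)
  have "(\<Sum>i<n. x i) / real n \<in> A"
    unfolding mean using assms(3,4) concave_on_imp_convex[OF assms(1)]
    by (intro convex_sum) auto
  then have pos: "0 < F ((\<Sum>i<n. x i) / real n)"
    by (rule assms(2))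
  have "(\<Sum>i<n. (1 / real n) * ln (F (x i))) \<le> ln (F ((\<Sum>i<n. x i) / real n))"
    unfolding mean using assms(1,3,4) by (intro concave_on_sum) auto
  then have "(\<Sum>i<n. ln (F (x i))) / real n \<le> ln (F ((\<Sum>i<n. x i) / real n))"
    by (simp add: sum_divide_distrib)
  then have "(\<Sum>i<n. ln (F (x i))) \<le> real n * ln (F ((\<Sum>i<n. x i) / real n))"
    using assms(3) by (simp add: divide_le_eq mult.commute)
  then show ?thesis
    using assms pos by (intro prod_le_of_sum_ln_le) (auto simp: ln_realpow)
qed

lemma prod_le_extremal_if_log_convex:
  fixes F :: "real \<Rightarrow> real" and x :: "nat \<Rightarrow> real"
  assumes "convex_on {lo..hi} (\<lambda>x. ln (F x))" "mono_on {lo..hi} F" "\<And>x. x \<in> {lo..hi} \<Longrightarrow> 0 < F x"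
    and "0 < n" "\<And>i. i < n \<Longrightarrow> x i \<in> {lo..hi}" "(\<Sum>i<n. x i) \<le> s" "s \<le> real n * hi"
  obtains k t where "k < n" "t \<in> {lo..hi}" "(real n - real k - 1) * lo + t + real k * hi = s"
    and "(\<Prod>i<n. F (x i)) \<le> F lo ^ (n - k - 1) * F t * F hi ^ k"
proof -
  have "mono_on {lo..hi} (\<lambda>x. ln (F x))"
    using assms(2,3) by (auto simp: mono_on_def)
  then obtain k t where k: "k < n" "t \<in> {lo..hi}" "(real n - real k - 1) * lo + t + real k * hi = s"
    and sum: "(\<Sum>i<n. ln (F (x i))) \<le> (real n - real k - 1) * ln (F lo) + ln (F t) + real k * ln (F hi)"
    using convex_mono_sum_le_extremal[OF assms(1) _ assms(4-7)] by blast
  have pos: "0 < F lo" "0 < F t" "0 < F hi"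
    using k(2) assms(3) by auto
  have "real (n - k - 1) = real n - real k - 1"
    using k(1) by (simp add: of_nat_diff)
  then have "ln (F lo ^ (n - k - 1) * F t * F hi ^ k)
      = (real n - real k - 1) * ln (F lo) + ln (F t) + real k * ln (F hi)"
    using pos by (simp add: ln_mult ln_realpow)
  then have "(\<Prod>i<n. F (x i)) \<le> F lo ^ (n - k - 1) * F t * F hi ^ k"
    using sum pos assms(3,5) by (intro prod_le_of_sum_ln_le) auto
  with k show thesis
    using that by blast
qed

section \<open>The factors N + (1 - x) / (1 - T / N)\<close>

definition factor :: "nat \<Rightarrow> real \<Rightarrow> real \<Rightarrow> real" where
  "factor N T x = real N + (1 - x) / (1 - T / real N)"

lemma fval_eq_factor:
  "fval eps N J m M c a =
     pref eps N (m + real J * c + (\<Sum>i<N - J. a i)) *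
     (\<Prod>i<N - J. factor N (min (m + (real N - 1) * M)
        ((real N - 2) * (a i - m) + real J * c + (\<Sum>i<N - J. a i))) (a i))"
  by (simp add: fval_def factor_def Let_def)

lemma fdiag_eq_factor:
  "fdiag eps N J m c t =
     pref eps N (m + real J * c + (real N - real J) * t) *
     factor N ((2 * real N - real J - 2) * t - (real N - 2) * m + real J * c) t ^ (N - J)"
  by (simp add: fdiag_def factor_def)

lemma fk_eq_factor:
  "fk eps N J m M c k t =
     pref eps N (m + Sk N J m M c k t) *
     factor N ((real N - 2) * (t - m) + Sk N J m M c k t) t *
     factor N (Sk N J m M c k t) m powi (int N - int J - int k - 1) *
     factor N (m + (real N - 1) * M) (Bk N J m M c k t) ^ k"
  by (simp add: fk_def factor_def)

lemma pref_nonneg: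
  assumes "0 \<le> eps" "x \<le> real N + 1"
  shows "0 \<le> pref eps N x"
proof -
  have "(exp eps - 1) * (x / (real N + 1)) \<le> exp eps - 1"
    using assms by (intro mult_left_le) auto
  then show ?thesis unfolding pref_def by simp
qed

lemma pref_antimono:
  assumes "0 \<le> eps" "x \<le> y"
  shows "pref eps N y \<le> pref eps N x"
proof -
  have "(exp eps - 1) * (x / (real N + 1)) \<le> (exp eps - 1) * (y / (real N + 1))"
    using assms by (intro mult_left_mono divide_right_mono) auto
  then show ?thesis unfolding pref_def by simp
qed

lemma factor_pos:
  assumes "0 < N" "T < real N" "x \<le> 1"
  shows "0 < factor N T x"
  using assms unfolding factor_def by (simp add: add_pos_nonneg)

lemma factor_mono_arg:
  assumes "0 < N" "T \<le> T'" "T' < real N" "x \<le> 1"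
  shows "factor N T x \<le> factor N T' x"
proof -
  have "1 - T' / real N \<le> 1 - T / real N" "0 < 1 - T' / real N"
    using assms by (auto simp: divide_right_mono)
  then show ?thesis
    unfolding factor_def using assms(4) by (simp add: divide_left_mono)
qed

lemma factor_antimono:
  assumes "0 < N" "T < real N" "x \<le> y"
  shows "factor N T y \<le> factor N T x"
proof -
  have "0 < 1 - T / real N"
    using assms by simp
  then show ?thesis
    unfolding factor_def using assms(3) by (simp add: divide_right_mono)
qed

lemma factor_min:
  assumes "0 < N" "D < real N" "T < real N" "x \<le> 1"
  shows "factor N (min D T) x = min (factor N D x) (factor N T x)"
  using factor_mono_arg[of N D T x] factor_mono_arg[of N T D x] assms
  by (cases "D \<le> T") (auto simp: min_def)

lemma factor_moebius:
  assumes "0 < N" "0 < R + K * (1 - x)"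
  shows "factor N (real N - R - K * (1 - x)) x
    = real N * (R + (K + 1) * (1 - x)) / (R + K * (1 - x))"
  using assms unfolding factor_def by (simp add: field_simps)

lemma ln_factor_moebius:
  assumes "0 < N" "0 < R + K * (1 - x)" "x \<le> 1"
  shows "ln (factor N (real N - R - K * (1 - x)) x)
    = ln (real N) + (ln (R + (K + 1) * (1 - x)) - ln (R + K * (1 - x)))"
proof -
  have "0 < R + (K + 1) * (1 - x)"
    using assms(2,3) by (simp add: distrib_right)
  then show ?thesis
    using assms by (simp add: factor_moebius ln_mult ln_div)
qed

lemma log_moebius_has_derivative:
  assumes "0 < R + K * (1 - x)" "x \<le> 1"
  shows "((\<lambda>x. ln (R + (K + 1) * (1 - x)) - ln (R + K * (1 - x))) has_real_derivative
      - R / ((R + (K + 1) * (1 - x)) * (R + K * (1 - x)))) (at x)"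
proof -
  have pos: "0 < R + (K + 1) * (1 - x)"
    using assms by (simp add: distrib_right)
  have "((\<lambda>x. ln (R + (K + 1) * (1 - x)) - ln (R + K * (1 - x))) has_real_derivative
      - (K + 1) / (R + (K + 1) * (1 - x)) - - K / (R + K * (1 - x))) (at x)"
    using assms pos by (auto intro!: derivative_eq_intros)
  moreover have "- (K + 1) / (R + (K + 1) * (1 - x)) - - K / (R + K * (1 - x))
      = - R / ((R + (K + 1) * (1 - x)) * (R + K * (1 - x)))"
    using assms pos by (simp add: field_simps)
  ultimately show ?thesis by simp
qed

lemma moebius_denominator_antimono:
  fixes K R x y :: real
  assumes "0 \<le> K" "0 < R + K * (1 - y)" "y \<le> 1" "x \<le> y"
  shows "0 < (R + (K + 1) * (1 - y)) * (R + K * (1 - y))"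
    and "(R + (K + 1) * (1 - y)) * (R + K * (1 - y)) \<le> (R + (K + 1) * (1 - x)) * (R + K * (1 - x))"
proof -
  have "R + (K + 1) * (1 - y) = (R + K * (1 - y)) + (1 - y)"
    by (simp add: algebra_simps)
  then have "0 < R + (K + 1) * (1 - y)"
    using assms(2,3) by linarith
  moreover have "R + (K + 1) * (1 - y) \<le> R + (K + 1) * (1 - x)" "R + K * (1 - y) \<le> R + K * (1 - x)"
    using assms by (simp_all add: mult_left_mono)
  ultimately show "0 < (R + (K + 1) * (1 - y)) * (R + K * (1 - y))"
    and "(R + (K + 1) * (1 - y)) * (R + K * (1 - y)) \<le> (R + (K + 1) * (1 - x)) * (R + K * (1 - x))"
    using assms(2) by (auto intro!: mult_mono)
qed

lemma convex_on_ln_factor_moebius: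
  assumes "0 < N" "0 \<le> K" "R \<le> 0" "hi \<le> 1" "0 < R + K * (1 - hi)"
  shows "convex_on {lo..hi} (\<lambda>x. ln (factor N (real N - R - K * (1 - x)) x))"
proof -
  have Q: "0 < R + K * (1 - x)" if "x \<le> hi" for x
    using assms that by (smt (verit) mult_left_mono)
  have "convex_on {lo..hi} (\<lambda>x. ln (R + (K + 1) * (1 - x)) - ln (R + K * (1 - x)))"
  proof (rule convex_on_realI)
    fix x assume "x \<in> {lo..hi}"
    then show "((\<lambda>x. ln (R + (K + 1) * (1 - x)) - ln (R + K * (1 - x))) has_real_derivative
        - R / ((R + (K + 1) * (1 - x)) * (R + K * (1 - x)))) (at x)"
      using Q assms(4) by (intro log_moebius_has_derivative) auto
  next
    fix x y assume "x \<in> {lo..hi}" "y \<in> {lo..hi}" "x \<le> y"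
    with moebius_denominator_antimono[OF assms(2) Q] assms(3,4)
    show "- R / ((R + (K + 1) * (1 - x)) * (R + K * (1 - x)))
        \<le> - R / ((R + (K + 1) * (1 - y)) * (R + K * (1 - y)))"
      by (intro divide_left_mono) auto
  qed simp
  then have "convex_on {lo..hi}
      (\<lambda>x. ln (real N) + (ln (R + (K + 1) * (1 - x)) - ln (R + K * (1 - x))))"
    by (intro convex_on_add) (auto simp: convex_on_const)
  then show ?thesis
    using assms(1,4) Q by (subst convex_on_cong[OF ln_factor_moebius]) auto
qed

lemma concave_on_ln_factor_moebius:
  assumes "0 < N" "0 \<le> K" "0 \<le> R" "hi \<le> 1" "0 < R + K * (1 - hi)"
  shows "concave_on {lo..hi} (\<lambda>x. ln (factor N (real N - R - K * (1 - x)) x))"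
proof -
  have Q: "0 < R + K * (1 - x)" if "x \<le> hi" for x
    using assms that by (smt (verit) mult_left_mono)
  have "convex_on {lo..hi} (\<lambda>x. - (ln (R + (K + 1) * (1 - x)) - ln (R + K * (1 - x))))"
  proof (rule convex_on_realI)
    fix x assume "x \<in> {lo..hi}"
    then show "((\<lambda>x. - (ln (R + (K + 1) * (1 - x)) - ln (R + K * (1 - x)))) has_real_derivative
        - (- R / ((R + (K + 1) * (1 - x)) * (R + K * (1 - x))))) (at x)"
      using Q assms(4) by (intro log_moebius_has_derivative DERIV_minus) auto
  next
    fix x y assume "x \<in> {lo..hi}" "y \<in> {lo..hi}" "x \<le> y"
    with moebius_denominator_antimono[OF assms(2) Q] assms(3,4)
    show "- (- R / ((R + (K + 1) * (1 - x)) * (R + K * (1 - x))))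
        \<le> - (- R / ((R + (K + 1) * (1 - y)) * (R + K * (1 - y))))"
      by (auto intro!: divide_left_mono)
  qed simp
  then have "concave_on {lo..hi}
      (\<lambda>x. ln (real N) + (ln (R + (K + 1) * (1 - x)) - ln (R + K * (1 - x))))"
    by (intro concave_on_add) (auto simp: concave_on_const concave_on_def)
  then show ?thesis
    using assms(1,4) Q by (subst concave_on_cong[OF ln_factor_moebius]) auto
qed

lemma mono_on_factor_moebius:
  assumes "0 < N" "0 \<le> K" "R \<le> 0" "0 < R + K * (1 - hi)"
  shows "mono_on {lo..hi} (\<lambda>x. factor N (real N - R - K * (1 - x)) x)"
proof (rule mono_onI)
  fix x y assume xy: "x \<in> {lo..hi}" "y \<in> {lo..hi}" "x \<le> y"
  have Q: "0 < R + K * (1 - z)" if "z \<le> hi" for z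
    using assms that by (smt (verit) mult_left_mono)
  have "(R + (K + 1) * (1 - x)) * (R + K * (1 - y)) \<le> (R + (K + 1) * (1 - y)) * (R + K * (1 - x))"
  proof -
    have "(R + (K + 1) * (1 - y)) * (R + K * (1 - x)) - (R + (K + 1) * (1 - x)) * (R + K * (1 - y))
        = - R * (y - x)"
      by (simp add: algebra_simps)
    then show ?thesis
      using assms(3) xy(3) by (smt (verit) mult_nonneg_nonneg)
  qed
  then have "(R + (K + 1) * (1 - x)) / (R + K * (1 - x)) \<le> (R + (K + 1) * (1 - y)) / (R + K * (1 - y))"
    using Q xy by (simp add: divide_simps)
  then show "factor N (real N - R - K * (1 - x)) x \<le> factor N (real N - R - K * (1 - y)) y"
    using xy Q assms(1) by (simp add: factor_moebius mult_left_mono flip: times_divide_eq_right)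
qed

section \<open>Bounding the product of capped factors\<close>

locale capped_product =
  fixes eps m M c :: real and N J :: nat and a :: "nat \<Rightarrow> real"
  assumes eps_nonneg: "0 \<le> eps" and N_gt_2: "2 < N" and J_less_N: "J < N"
    and M_less_1: "M < 1" and m_le_M: "m \<le> M" and c_range: "c \<in> {m..M}"
    and a_range: "\<And>i. i < N - J \<Longrightarrow> a i \<in> {m..M}"
begin

definition n :: nat where "n = N - J"
definition K :: real where "K = real N - 2"
definition C :: real where "C = real J * c"
definition D :: real where "D = m + (real N - 1) * M"
definition S :: real where "S = (\<Sum>i<n. a i)"
definition T :: "real \<Rightarrow> real" where "T x = K * (x - m) + C + S"
definition R :: real where "R = 2 - C - S + K * m"
definition g :: "real \<Rightarrow> real" where "g x = factor N (min D (T x)) x"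
definition h :: "real \<Rightarrow> real" where "h x = factor N (T x) x"
definition U :: real where "U = Uk N J m M c (n - 1)"
definition \<theta> :: real where "\<theta> = m + (D - C - S) / K"

lemma n_pos: "0 < n"
  using J_less_N by (simp add: n_def)

lemma real_N: "real N = real J + real n"
  using J_less_N by (simp add: n_def of_nat_diff)

lemma N_pos: "0 < N"
  using N_gt_2 by simp

lemma K_pos: "0 < K"
  using N_gt_2 by (simp add: K_def)

lemma a_bounds: "i < n \<Longrightarrow> a i \<in> {m..M}"
  using a_range by (simp add: n_def)

lemma a_le_1: "i < n \<Longrightarrow> a i \<le> 1"
  using a_bounds M_less_1 by fastforce

lemma S_bounds: "real n * m \<le> S" "S \<le> real n * M"
proof -
  have "(\<Sum>i<n. m) \<le> S" "S \<le> (\<Sum>i<n. M)"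
    unfolding S_def by (rule sum_mono, use a_bounds in force)+
  then show "real n * m \<le> S" "S \<le> real n * M"
    by simp_all
qed

lemma C_bounds: "real J * m \<le> C" "C \<le> real J * M"
  using c_range by (auto simp: C_def intro!: mult_left_mono)

lemma D_less_N: "D < real N"
proof -
  have "(real N - 1) * M < real N - 1"
    using M_less_1 N_gt_2 by simp
  then show ?thesis
    using M_less_1 m_le_M by (simp add: D_def)
qed

lemma pref_nonneg_at_sum: "0 \<le> pref eps N (m + C + S)"
proof -
  have "real n * M \<le> real n" "real J * M \<le> real J"
    using M_less_1 by (simp_all add: mult_left_le)
  then show ?thesis
    using S_bounds C_bounds M_less_1 m_le_M real_N eps_nonneg by (intro pref_nonneg) auto
qed

lemma T_moebius: "T x = real N - R - K * (1 - x)"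
  by (simp add: T_def R_def K_def algebra_simps)

lemma fval_eq: "fval eps N J m M c a = pref eps N (m + C + S) * (\<Prod>i<n. g (a i))"
  by (simp add: fval_eq_factor g_def T_def K_def C_def D_def S_def n_def add.assoc)

lemma fdiag_eq:
  "fdiag eps N J m c t = pref eps N (m + C + real n * t) * factor N ((K + real n) * t - K * m + C) t ^ n"
  using J_less_N by (simp add: fdiag_eq_factor K_def C_def n_def of_nat_diff algebra_simps)

lemma g_pos: "x \<le> 1 \<Longrightarrow> 0 < g x"
  using D_less_N N_pos by (simp add: g_def factor_pos)

lemma g_le_cap: "x \<le> 1 \<Longrightarrow> g x \<le> factor N D x"
  using D_less_N N_pos by (simp add: g_def factor_mono_arg)

lemma ln_cap_concave: "concave_on {m..M} (\<lambda>x. ln (factor N D x))"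
  using concave_on_ln_factor_moebius[of N 0 "real N - D" M m] N_pos D_less_N M_less_1 by simp

lemma U_eq: "(K + real n) * U = (real N - 1) * (M + m) - C"
proof -
  have "real (n - 1) = real n - 1"
    using n_pos by (simp add: of_nat_diff)
  then have "U = ((real N - 1) * (M + m) - C) / (K + real n)"
    by (simp add: U_def Uk_def K_def C_def real_N algebra_simps)
  moreover have "0 < K + real n"
    using K_pos by simp
  ultimately show ?thesis
    by simp
qed

lemma U_cap: "(K + real n) * U - K * m + C = D"
  using U_eq by (simp add: D_def K_def algebra_simps)

lemma U_bounds: "m \<le> U" "U \<le> M"
proof -
  have "(real n - 1) * m \<le> (real n - 1) * M"
    using n_pos m_le_M by (intro mult_left_mono) auto
  then have "(K + real n) * m \<le> (K + real n) * U" "(K + real n) * U \<le> (K + real n) * M"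
    using U_eq C_bounds unfolding K_def real_N by (auto simp: algebra_simps)
  moreover have "0 < K + real n"
    using K_pos by simp
  ultimately show "m \<le> U" "U \<le> M"
    by simp_all
qed

lemma fval_le_fdiag_U:
  assumes "real n * U \<le> S"
  shows "fval eps N J m M c a \<le> fdiag eps N J m c U"
proof -
  have mean: "U \<le> S / real n" "S / real n \<le> M"
    using assms S_bounds n_pos by (simp_all add: field_simps)
  have cap_pos: "0 < factor N D x" if "x \<le> 1" for x
    using N_pos D_less_N that by (rule factor_pos)
  have "(\<Prod>i<n. g (a i)) \<le> (\<Prod>i<n. factor N D (a i))"
    using a_le_1 by (intro prod_mono) (auto simp: g_pos g_le_cap less_imp_le)
  also have "\<dots> \<le> factor N D (S / real n) ^ n"
    unfolding S_def using ln_cap_concave n_pos a_bounds M_less_1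
    by (intro prod_le_power_mean_if_log_concave) (auto intro: cap_pos)
  also have "\<dots> \<le> factor N D U ^ n"
    using mean M_less_1 cap_pos[of "S / real n"]
    by (intro power_mono factor_antimono N_pos D_less_N) auto
  finally have prod: "(\<Prod>i<n. g (a i)) \<le> factor N D U ^ n" .
  have "fval eps N J m M c a \<le> pref eps N (m + C + S) * factor N D U ^ n"
    unfolding fval_eq using prod pref_nonneg_at_sum by (rule mult_left_mono)
  also have "\<dots> \<le> pref eps N (m + C + real n * U) * factor N D U ^ n"
    using assms eps_nonneg U_bounds M_less_1 cap_pos[of U]
    by (intro mult_right_mono pref_antimono) auto
  also have "\<dots> = fdiag eps N J m c U"
    by (simp add: fdiag_eq U_cap)
  finally show ?thesis .
qed

lemma mean_bounds: "m \<le> S / real n" "S / real n \<le> M"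
  using S_bounds n_pos by (simp_all add: field_simps)

lemma T_mean: "T (S / real n) = (K + real n) * (S / real n) - K * m + C"
  using n_pos by (simp add: T_def field_simps)

lemma T_mean_less_cap:
  assumes "S < real n * U"
  shows "T (S / real n) < D"
proof -
  have "S / real n < U"
    using assms n_pos by (simp add: field_simps)
  then have "(K + real n) * (S / real n) < (K + real n) * U"
    using K_pos by (intro mult_strict_left_mono) auto
  then show ?thesis
    using U_cap T_mean by linarith
qed

lemma fdiag_mean: "fdiag eps N J m c (S / real n) = pref eps N (m + C + S) * h (S / real n) ^ n"
  using n_pos by (simp add: fdiag_eq h_def T_mean)

lemma fval_le_fdiag_mean:
  assumes "S < real n * U" "0 \<le> R"
  shows "fval eps N J m M c a \<le> fdiag eps N J m c (S / real n)"
proof -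
  have T_less_N: "T x < real N" if "x < 1" for x
    using assms(2) K_pos that unfolding T_moebius by (smt (verit) mult_pos_pos)
  have "concave_on {m..M} (\<lambda>x. ln (h x))"
    unfolding h_def T_moebius using M_less_1 K_pos assms(2)
    by (intro concave_on_ln_factor_moebius N_pos) (auto intro: add_nonneg_pos)
  with ln_cap_concave have "concave_on {m..M} (\<lambda>x. min (ln (factor N D x)) (ln (h x)))"
    by (rule concave_on_min)
  moreover have "ln (g x) = min (ln (factor N D x)) (ln (h x))" if "x \<in> {m..M}" for x
  proof -
    have "x < 1"
      using that M_less_1 by simp
    then have "g x = min (factor N D x) (h x)" "0 < factor N D x" "0 < h x"
      using N_pos D_less_N T_less_N[of x]
      by (simp_all add: g_def h_def factor_min factor_pos)
    then show ?thesis
      by (auto simp: min_def)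
  qed
  ultimately have "concave_on {m..M} (\<lambda>x. ln (g x))"
    by (subst concave_on_cong) auto
  then have "(\<Prod>i<n. g (a i)) \<le> g (S / real n) ^ n"
    unfolding S_def using n_pos a_bounds M_less_1
    by (intro prod_le_power_mean_if_log_concave) (auto intro: g_pos)
  also have "g (S / real n) = h (S / real n)"
    using T_mean_less_cap[OF assms(1)] by (simp add: g_def h_def)
  finally have "fval eps N J m M c a \<le> pref eps N (m + C + S) * h (S / real n) ^ n"
    unfolding fval_eq using pref_nonneg_at_sum by (rule mult_left_mono)
  then show ?thesis
    by (simp add: fdiag_mean)
qed

lemma K_\<theta>: "K * \<theta> = K * m + D - C - S"
  using K_pos by (simp add: \<theta>_def field_simps)

lemma T_\<theta>: "T \<theta> = D"
  using K_\<theta> by (simp add: T_def algebra_simps)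

lemma T_le_cap:
  assumes "x \<le> \<theta>"
  shows "T x \<le> D"
proof -
  have "K * x \<le> K * \<theta>"
    using K_pos assms by simp
  then show ?thesis
    using K_\<theta> by (simp add: T_def right_diff_distrib)
qed

lemma mean_less_\<theta>:
  assumes "S < real n * U"
  shows "S / real n < \<theta>"
proof -
  have "K * (S / real n) < K * \<theta>"
    using T_mean_less_cap[OF assms] K_\<theta> by (simp add: T_def right_diff_distrib)
  then show ?thesis
    using K_pos by (simp only: mult_less_cancel_left_pos)
qed

lemma \<theta>_less_1:
  assumes "R < 0"
  shows "\<theta> < 1"
proof -
  have "0 < K * (1 - \<theta>)"
    using T_moebius[of \<theta>] T_\<theta> D_less_N assms by simp
  then show ?thesis
    using K_pos by (simp add: zero_less_mult_iff)
qed

lemma h_pos: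
  assumes "x \<le> \<theta>" "\<theta> \<le> 1"
  shows "0 < h x"
  unfolding h_def using N_pos T_le_cap[OF assms(1)] D_less_N assms
  by (intro factor_pos) auto

lemma ln_h_convex:
  assumes "R < 0"
  shows "convex_on {m..\<theta>} (\<lambda>x. ln (h x))"
  unfolding h_def T_moebius
  using K_pos assms \<theta>_less_1[OF assms] T_moebius[of \<theta>] T_\<theta> D_less_N
  by (intro convex_on_ln_factor_moebius N_pos) auto

lemma h_mono:
  assumes "R < 0"
  shows "mono_on {m..\<theta>} h"
  unfolding h_def T_moebius
  using K_pos assms T_moebius[of \<theta>] T_\<theta> D_less_N
  by (intro mono_on_factor_moebius N_pos) auto

lemma g_le_h_min:
  assumes "x \<le> 1"
  shows "g x \<le> h (min x \<theta>)"
proof (cases "x \<le> \<theta>")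
  case True
  then show ?thesis
    using T_le_cap by (simp add: g_def h_def)
next
  case False
  then have "g x \<le> factor N D \<theta>"
    using g_le_cap[OF assms] factor_antimono[OF N_pos D_less_N, of \<theta> x] by simp
  then show ?thesis
    using False T_\<theta> by (simp add: h_def)
qed

lemma extremal_identity:
  assumes "(real n - real k - 1) * m + t + real k * \<theta> = S"
  shows "(real N + real k - 2) * \<theta>
    = (real N - 1) * (M + m) - (C + (real N - real J - real k - 1) * m + t)"
  using assms K_\<theta> unfolding K_def D_def real_N by (simp add: algebra_simps)

lemma Bk_extremal:
  assumes "(real n - real k - 1) * m + t + real k * \<theta> = S"
  shows "Bk N J m M c k t = \<theta>"
proof -
  have "0 < real N + real k - 2"
    using N_gt_2 by simp
  then show ?thesis
    using extremal_identity[OF assms] by (simp add: Bk_def C_def field_simps)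
qed

lemma Uk_extremal:
  assumes "(real n - real k - 1) * m + t + real k * \<theta> = S" "t \<le> \<theta>"
  shows "t \<le> Uk N J m M c k"
proof -
  have "(real N + real k - 2) * t \<le> (real N + real k - 2) * \<theta>"
    using assms(2) N_gt_2 by (intro mult_left_mono) auto
  moreover have "0 < real N + real k - 1"
    using N_gt_2 by simp
  ultimately show ?thesis
    using extremal_identity[OF assms(1)] by (simp add: Uk_def C_def field_simps)
qed

lemma fk_extremal:
  assumes "k < n" "(real n - real k - 1) * m + t + real k * \<theta> = S"
  shows "fk eps N J m M c k t = pref eps N (m + C + S) * (h m ^ (n - k - 1) * h t * h \<theta> ^ k)"
proof -
  have Sk: "Sk N J m M c k t = T m"
    using assms(2) Bk_extremal[OF assms(2)] by (simp add: Sk_def T_def C_def real_N algebra_simps)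
  have args: "m + Sk N J m M c k t = m + C + S" "(real N - 2) * (t - m) + Sk N J m M c k t = T t"
    "m + (real N - 1) * M = T \<theta>"
    using Sk T_\<theta> by (simp_all add: T_def K_def D_def)
  have "int N - int J - int k - 1 = int (n - k - 1)"
    using assms(1) J_less_N by (simp add: n_def)
  then show ?thesis
    unfolding fk_eq_factor args unfolding Sk Bk_extremal[OF assms(2)]
    by (simp add: h_def power_int_of_nat mult_ac)
qed

lemma fval_le_fk:
  assumes "S < real n * U" "R < 0"
  obtains k t where "k < n" "t \<in> {m..Uk N J m M c k}" "fval eps N J m M c a \<le> fk eps N J m M c k t"
proof -
  have \<theta>: "S / real n < \<theta>" "\<theta> \<le> 1"
    using mean_less_\<theta>[OF assms(1)] \<theta>_less_1[OF assms(2)] by simp_all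
  have capped: "min (a i) \<theta> \<in> {m..\<theta>}" if "i < n" for i
    using a_bounds[OF that] mean_bounds(1) \<theta>(1) by auto
  have sum_le: "(\<Sum>i<n. min (a i) \<theta>) \<le> S"
    unfolding S_def by (intro sum_mono) simp
  have S_le: "S \<le> real n * \<theta>"
    using \<theta>(1) n_pos by (simp add: field_simps)
  have h_pos_on: "0 < h x" if "x \<in> {m..\<theta>}" for x
    using h_pos \<theta>(2) that by simp
  obtain k t where k: "k < n" "t \<in> {m..\<theta>}"
    and sum: "(real n - real k - 1) * m + t + real k * \<theta> = S"
    and prod: "(\<Prod>i<n. h (min (a i) \<theta>)) \<le> h m ^ (n - k - 1) * h t * h \<theta> ^ k"
    using prod_le_extremal_if_log_convex[OF ln_h_convex[OF assms(2)] h_mono[OF assms(2)] h_pos_on n_pos,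
        of "\<lambda>i. min (a i) \<theta>" S] capped sum_le S_le
    by blast
  have "(\<Prod>i<n. g (a i)) \<le> (\<Prod>i<n. h (min (a i) \<theta>))"
    using a_le_1 by (intro prod_mono) (auto simp: g_pos g_le_h_min less_imp_le)
  with prod have "fval eps N J m M c a \<le> pref eps N (m + C + S) * (h m ^ (n - k - 1) * h t * h \<theta> ^ k)"
    unfolding fval_eq using pref_nonneg_at_sum by (intro mult_left_mono) auto
  also have "\<dots> = fk eps N J m M c k t"
    using fk_extremal[OF k(1) sum] ..
  finally show thesis
    using that k Uk_extremal[OF sum] by auto
qed

end

theorem proposition9:
  fixes eps m M c :: real and N J :: nat and a :: "nat \<Rightarrow> real"
  assumes "eps \<ge> 0" and "N > 2" and "J < N"
    and "0 < m" and "m < 1" and "0 < M" and "M < 1" and "m \<le> M"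
    and "m \<le> c" and "c \<le> M"
    and "\<forall>i<N - J. a i \<in> {m..M}"
  shows "(\<exists>t\<in>{m..Uk N J m M c (N - J - 1)}. fval eps N J m M c a \<le> fdiag eps N J m c t)
       \<or> (\<exists>k\<le>N - J. \<exists>t\<in>{m..Uk N J m M c k}. fval eps N J m M c a \<le> fk eps N J m M c k t)"
proof -
  interpret capped_product eps m M c N J a
    using assms by unfold_locales auto
  have U: "U = Uk N J m M c (N - J - 1)"
    by (simp add: U_def n_def)
  consider (large_mean) "real n * U \<le> S"
    | (log_concave) "S < real n * U" "0 \<le> R"
    | (log_convex) "S < real n * U" "R < 0"
    by linarith
  then show ?thesis
  proof cases
    case large_mean
    then show ?thesis
      using fval_le_fdiag_U U_bounds U by auto
  next
    case log_concave
    then have "S / real n \<in> {m..U}"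
      using mean_bounds n_pos by (auto simp: field_simps)
    then show ?thesis
      using fval_le_fdiag_mean[OF log_concave] U by auto
  next
    case log_convex
    then obtain k t where "k < n" "t \<in> {m..Uk N J m M c k}" "fval eps N J m M c a \<le> fk eps N J m M c k t"
      by (rule fval_le_fk)
    then show ?thesis
      by (auto simp: n_def)
  qed
qed

end
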